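(* Let $m\geq 1$, $n\geq 3$ and $p\geq 2$ be integers. For all vertices $i,j$ of the oriented Dutch windmill graph $D^m_n$, the number of walks in $D^m_n$ of length $pn-1$ from $i$ to $j$ is $m^{p-1}$ times the number of walks of length $n-1$ from $i$ to $j$.
   Context: For integers $m\geq 1$, $n\geq 3$, the oriented Dutch windmill graph $D^m_n$ is the directed graph with vertex set $V=\{1,2,\ldots,m(n-1)+1\}$ whose directed edges $(a,b)$ are exactly: $(1,(k-1)(n-1)+2)$ for $k\in\{1,\ldots,m\}$; $((k-1)(n-1)+i,(k-1)(n-1)+i+1)$ for $k\in\{1,\ldots,m\}$ and $i\in\{2,\ldots,n-1\}$; and $((k-1)(n-1)+n,1)$ for $k\in\{1,\ldots,m\}$. A walk is a sequence of vertices $\langle v_1,\ldots,v_r\rangle$ in which each $(v_t,v_{t+1})$ is an edge; its length is $r-1$; walks are distinct when they are distinct sequences. *)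

theory Defs
  imports Main
begin

definition dw_vertices :: "nat \<Rightarrow> nat \<Rightarrow> nat set" where
  "dw_vertices m n = {1 .. m * (n - 1) + 1}"

definition dw_edges :: "nat \<Rightarrow> nat \<Rightarrow> (nat \<times> nat) set" where
  "dw_edges m n =
     {(1, (k - 1) * (n - 1) + 2) | k. k \<in> {1..m}}
   \<union> {((k - 1) * (n - 1) + i, (k - 1) * (n - 1) + i + 1) | k i. k \<in> {1..m} \<and> i \<in> {2..n - 1}}
   \<union> {((k - 1) * (n - 1) + n, 1) | k. k \<in> {1..m}}"

definition is_walk :: "(nat \<times> nat) set \<Rightarrow> nat list \<Rightarrow> bool" where
  "is_walk E w \<longleftrightarrow> w \<noteq> [] \<and> (\<forall>t. Suc t < length w \<longrightarrow> (w ! t, w ! Suc t) \<in> E)"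

definition dw_walks :: "nat \<Rightarrow> nat \<Rightarrow> nat \<Rightarrow> nat \<Rightarrow> nat \<Rightarrow> nat list set" where
  "dw_walks m n L i j =
     {w. is_walk (dw_edges m n) w \<and> length w = L + 1 \<and> hd w = i \<and> last w = j}"

end

theory Submission
  imports Defs
begin

(* Away from the centre 1 the windmill is deterministic: every blade is a directed path
   that leads back to 1.  Hence a walk starting at a vertex i is forced for some d < n steps
   until it reaches 1, and a walk leaving 1 chooses one of the m blades and is then forced
   to return to 1 after exactly n steps.  Writing W(L, i) for the number of walks of length L
   from i to j, this gives W(L + d, i) = W(L, 1) and W(L + n, 1) = m W(L, 1), and the claim
   follows from p n - 1 = (n - 1 - d) + (p - 1) n + d. *)

definition walks :: "(nat \<times> nat) set \<Rightarrow> nat \<Rightarrow> nat \<Rightarrow> nat \<Rightarrow> nat list set" where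
  "walks E L i j = {w. is_walk E w \<and> length w = L + 1 \<and> hd w = i \<and> last w = j}"

lemma dw_walks_eq_walks: "dw_walks m n = walks (dw_edges m n)"
  by (simp add: fun_eq_iff dw_walks_def walks_def)

lemma is_walk_Cons:
  "is_walk E (x # w) \<longleftrightarrow> w = [] \<or> (x, hd w) \<in> E \<and> is_walk E w"
  unfolding is_walk_def by (cases w) (auto simp: nth_Cons hd_conv_nth split: nat.splits)

lemma walks_Suc:
  "walks E (Suc L) i j = Cons i ` (\<Union>s \<in> E `` {i}. walks E L s j)"
proof (intro equalityI subsetI)
  fix w assume w: "w \<in> walks E (Suc L) i j"
  then obtain w' where w': "w = i # w'"
    by (cases w) (auto simp: walks_def)
  with w have "w' \<in> walks E L (hd w') j" "hd w' \<in> E `` {i}"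
    by (auto simp: walks_def is_walk_Cons)
  with w' show "w \<in> Cons i ` (\<Union>s \<in> E `` {i}. walks E L s j)"
    by blast
next
  fix w assume "w \<in> Cons i ` (\<Union>s \<in> E `` {i}. walks E L s j)"
  then show "w \<in> walks E (Suc L) i j"
    by (auto simp: walks_def is_walk_Cons)
qed

lemma finite_walks:
  assumes "finite E"
  shows "finite (walks E L i j)"
proof (induction L arbitrary: i)
  case 0
  have "walks E 0 i j \<subseteq> {[i]}"
    by (auto simp: walks_def length_Suc_conv)
  then show ?case
    by (rule finite_subset) simp
next
  case (Suc L)
  show ?case
    unfolding walks_Suc using Suc.IH assms by (simp add: finite_Image)
qed

lemma card_walks_Suc:
  assumes "finite E"
  shows "card (walks E (Suc L) i j) = (\<Sum>s \<in> E `` {i}. card (walks E L s j))"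
proof -
  have "card (walks E (Suc L) i j) = card (\<Union>s \<in> E `` {i}. walks E L s j)"
    unfolding walks_Suc by (simp add: card_image)
  also have "\<dots> = (\<Sum>s \<in> E `` {i}. card (walks E L s j))"
  proof (rule card_UN_disjoint)
    show "finite (E `` {i})"
      using assms by (simp add: finite_Image)
    show "\<forall>s \<in> E `` {i}. finite (walks E L s j)"
      using finite_walks[OF assms] by blast
    show "\<forall>s \<in> E `` {i}. \<forall>s' \<in> E `` {i}. s \<noteq> s' \<longrightarrow> walks E L s j \<inter> walks E L s' j = {}"
      by (auto simp: walks_def)
  qed
  finally show ?thesis .
qed

lemma card_walks_Suc_singleton:
  assumes "finite E" and "E `` {i} = {s}"
  shows "card (walks E (Suc L) i j) = card (walks E L s j)"
  using assms by (simp add: card_walks_Suc)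

text \<open>Vertex t (2 \<le> t \<le> n) of blade k: together with the centre 1 the vertices
  blade_vertex n k 2, ..., blade_vertex n k n form a directed n-cycle.\<close>
abbreviation blade_vertex :: "nat \<Rightarrow> nat \<Rightarrow> nat \<Rightarrow> nat" where
  "blade_vertex n k t \<equiv> (k - 1) * (n - 1) + t"

lemma dw_edges_iff:
  "(x, y) \<in> dw_edges m n \<longleftrightarrow>
      x = 1 \<and> (\<exists>k\<in>{1..m}. y = blade_vertex n k 2)
    \<or> (\<exists>k\<in>{1..m}. \<exists>t\<in>{2..n - 1}. x = blade_vertex n k t \<and> y = blade_vertex n k t + 1)
    \<or> y = 1 \<and> (\<exists>k\<in>{1..m}. x = blade_vertex n k n)"
  unfolding dw_edges_def by blast

lemma finite_dw_edges: "finite (dw_edges m n)"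
  unfolding dw_edges_def by (intro finite_UnI finite_image_set finite_image_set2) auto

lemma blade_vertex_inj:
  assumes "n \<ge> 2" "2 \<le> t" "t \<le> n" "2 \<le> t'" "t' \<le> n"
    and "blade_vertex n k t = blade_vertex n k' t'"
  shows "k - 1 = k' - 1" and "t = t'"
proof -
  have eq: "(k - 1) * (n - 1) + (t - 2) = (k' - 1) * (n - 1) + (t' - 2)"
    using assms by simp
  have "t - 2 < n - 1" "t' - 2 < n - 1"
    using assms by auto
  then have "((k - 1) * (n - 1) + (t - 2)) div (n - 1) = k - 1"
    and "((k' - 1) * (n - 1) + (t' - 2)) div (n - 1) = k' - 1"
    by simp_all
  with eq show "k - 1 = k' - 1"
    by simp
  with eq assms show "t = t'"
    by simp
qed

lemma dw_vertex_cases: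
  assumes "n \<ge> 2" and "i \<in> dw_vertices m n"
  obtains (centre) "i = 1"
    | (blade) k t where "1 \<le> k" "k \<le> m" "2 \<le> t" "t \<le> n" "i = blade_vertex n k t"
proof (cases "i = 1")
  case False
  with assms have i: "2 \<le> i" "i - 2 < m * (n - 1)"
    unfolding dw_vertices_def by auto
  define k where "k = (i - 2) div (n - 1) + 1"
  define t where "t = (i - 2) mod (n - 1) + 2"
  have "(i - 2) mod (n - 1) < n - 1"
    using assms(1) by simp
  then have "t \<le> n"
    unfolding t_def by linarith
  moreover have "k \<le> m"
    using i less_mult_imp_div_less unfolding k_def by fastforce
  moreover have "i = blade_vertex n k t"
    using i div_mult_mod_eq[of "i - 2" "n - 1"] unfolding k_def t_def by simp
  ultimately show ?thesis
    using that(2)[of k t] unfolding k_def t_def by simp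
qed (rule that(1))

lemma dw_successors_centre:
  assumes "n \<ge> 3"
  shows "dw_edges m n `` {1} = (\<lambda>k. blade_vertex n k 2) ` {1..m}"
  using assms by (force simp: dw_edges_iff)

lemma dw_successors_inner:
  assumes "n \<ge> 3" "1 \<le> k" "k \<le> m" "2 \<le> t" "t < n"
  shows "dw_edges m n `` {blade_vertex n k t} = {blade_vertex n k t + 1}"
proof (intro equalityI subsetI)
  fix s assume "s \<in> dw_edges m n `` {blade_vertex n k t}"
  then consider "blade_vertex n k t = 1"
    | k' t' where "t' \<in> {2..n - 1}" "blade_vertex n k t = blade_vertex n k' t'"
        "s = blade_vertex n k' t' + 1"
    | k' where "blade_vertex n k t = blade_vertex n k' n"
    unfolding Image_singleton_iff dw_edges_iff by blast
  then show "s \<in> {blade_vertex n k t + 1}"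
  proof cases
    case 3
    then have "t = n"
      using blade_vertex_inj(2)[of n t n k k'] assms by simp
    with assms show ?thesis
      by simp
  qed (use assms in simp_all)
next
  have "k \<in> {1..m}" "t \<in> {2..n - 1}"
    using assms by auto
  then show "s \<in> dw_edges m n `` {blade_vertex n k t}" if "s \<in> {blade_vertex n k t + 1}" for s
    using that unfolding Image_singleton_iff dw_edges_iff by blast
qed

lemma dw_successors_last:
  assumes "n \<ge> 3" "1 \<le> k" "k \<le> m"
  shows "dw_edges m n `` {blade_vertex n k n} = {1}"
proof (intro equalityI subsetI)
  fix s assume "s \<in> dw_edges m n `` {blade_vertex n k n}"
  then consider "blade_vertex n k n = 1"
    | k' t' where "t' \<in> {2..n - 1}" "blade_vertex n k n = blade_vertex n k' t'"
    | "s = 1"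
    unfolding Image_singleton_iff dw_edges_iff by blast
  then show "s \<in> {1}"
  proof cases
    case 2
    then have "n = t'"
      using blade_vertex_inj(2)[of n n t' k k'] assms by auto
    with 2 show ?thesis
      by auto
  qed (use assms in simp_all)
qed (use assms in \<open>auto simp: dw_edges_iff\<close>)

lemma card_dw_walks_Suc_singleton:
  assumes "dw_edges m n `` {i} = {s}"
  shows "card (dw_walks m n (Suc L) i j) = card (dw_walks m n L s j)"
  using card_walks_Suc_singleton[OF finite_dw_edges assms] by (simp add: dw_walks_eq_walks)

lemma card_dw_walks_blade_to_centre:
  assumes "n \<ge> 3" "1 \<le> k" "k \<le> m" "2 \<le> t" "t \<le> n"
  shows "card (dw_walks m n (L + (n + 1 - t)) (blade_vertex n k t) j) = card (dw_walks m n L 1 j)"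
  using \<open>t \<le> n\<close> \<open>2 \<le> t\<close>
proof (induction t rule: inc_induct)
  case base
  have "L + (n + 1 - n) = Suc L"
    by simp
  then show ?case
    using card_dw_walks_Suc_singleton[OF dw_successors_last[OF assms(1-3)]] by simp
next
  case (step t)
  have "L + (n + 1 - t) = Suc (L + (n + 1 - Suc t))"
    using step.hyps by simp
  then show ?case
    using card_dw_walks_Suc_singleton[OF dw_successors_inner[OF assms(1-3) step.prems step.hyps(2)]]
      step.IH step.prems by simp
qed

lemma card_dw_walks_centre_cycle:
  assumes "n \<ge> 3"
  shows "card (dw_walks m n (L + n) 1 j) = m * card (dw_walks m n L 1 j)"
proof -
  let ?first = "\<lambda>k. blade_vertex n k 2"
  have "inj_on ?first {1..m}"
    using blade_vertex_inj(1)[of n 2 2] assms by (intro inj_onI) force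
  have "L + n = Suc (L + (n - 1))"
    using assms by simp
  then have "card (dw_walks m n (L + n) 1 j) = card (walks (dw_edges m n) (Suc (L + (n - 1))) 1 j)"
    by (simp only: dw_walks_eq_walks)
  also have "\<dots> = (\<Sum>s \<in> ?first ` {1..m}. card (walks (dw_edges m n) (L + (n - 1)) s j))"
    by (simp only: card_walks_Suc[OF finite_dw_edges] dw_successors_centre[OF assms])
  also have "\<dots> = (\<Sum>k \<in> {1..m}. card (dw_walks m n (L + (n - 1)) (?first k) j))"
    using \<open>inj_on ?first {1..m}\<close> by (simp add: sum.reindex dw_walks_eq_walks)
  also have "\<dots> = (\<Sum>k \<in> {1..m}. card (dw_walks m n L 1 j))"
    using card_dw_walks_blade_to_centre[of n _ m 2 L j] assms by (intro sum.cong) auto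
  finally show ?thesis
    by simp
qed

lemma card_dw_walks_centre_cycles:
  assumes "n \<ge> 3"
  shows "card (dw_walks m n (L + q * n) 1 j) = m ^ q * card (dw_walks m n L 1 j)"
proof (induction q)
  case (Suc q)
  have "L + Suc q * n = (L + q * n) + n"
    by simp
  then have "card (dw_walks m n (L + Suc q * n) 1 j) = m * card (dw_walks m n (L + q * n) 1 j)"
    by (simp only: card_dw_walks_centre_cycle[OF assms])
  with Suc.IH show ?case
    by simp
qed simp

lemma card_dw_walks_to_centre:
  assumes "n \<ge> 3" and "i \<in> dw_vertices m n"
  obtains d where "d < n" "\<And>L. card (dw_walks m n (L + d) i j) = card (dw_walks m n L 1 j)"
proof -
  have "n \<ge> 2"
    using assms(1) by simp
  then show ?thesis
    using assms(2)
  proof (cases rule: dw_vertex_cases)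
    case centre
    then show ?thesis
      using that[of 0] assms by simp
  next
    case (blade k t)
    then show ?thesis
      using that[of "n + 1 - t"] card_dw_walks_blade_to_centre[OF assms(1)] by simp
  qed
qed

theorem proposition2p8:
  fixes m n p i j :: nat
  assumes "m \<ge> 1" and "n \<ge> 3" and "p \<ge> 2"
    and "i \<in> dw_vertices m n" and "j \<in> dw_vertices m n"
  shows "card (dw_walks m n (p * n - 1) i j) = m ^ (p - 1) * card (dw_walks m n (n - 1) i j)"
proof -
  obtain d where "d < n" and to_centre:
    "\<And>L. card (dw_walks m n (L + d) i j) = card (dw_walks m n L 1 j)"
    using card_dw_walks_to_centre[OF assms(2,4)] by blast
  have length_split: "p * n - 1 = (n - 1 - d + (p - 1) * n) + d"
    using \<open>d < n\<close> assms(3) by (cases p) (simp_all add: algebra_simps)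
  have "card (dw_walks m n (p * n - 1) i j) = card (dw_walks m n (n - 1 - d + (p - 1) * n) 1 j)"
    unfolding length_split by (rule to_centre)
  also have "\<dots> = m ^ (p - 1) * card (dw_walks m n (n - 1 - d) 1 j)"
    using card_dw_walks_centre_cycles[OF assms(2)] .
  also have "card (dw_walks m n (n - 1 - d) 1 j) = card (dw_walks m n (n - 1) i j)"
    using to_centre[of "n - 1 - d"] \<open>d < n\<close> by simp
  finally show ?thesis .
qed

end
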